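(* Let $I$ be the tridendriform ideal of $\mathcal{A}$ generated by $\{x\cdot y: x,y\in\mathcal{A}^+\}$. Then $I$ is a $(3,2)$-dendriform biideal of $(\mathcal{A},\prec,\cdot,\succ,\Delta_\leftarrow,\Delta_\rightarrow)$: it is a tridendriform ideal, $\varepsilon(I)=0$, and $\Delta_\leftarrow(I)\subseteq I\otimes\mathcal{A}+\mathcal{A}\otimes I$, $\Delta_\rightarrow(I)\subseteq I\otimes\mathcal{A}+\mathcal{A}\otimes I$.
   Context: Trees: planar rooted trees in which every internal vertex has at least two children; the root vertex hangs from a trunk edge; leaves are edges without upper vertex; $|$ is the one-leaf tree; $\mathcal A$ is the $\mathbb K$-span of all trees, $\mathcal A^+$ that of trees $\neq|$. Products: $x_0\vee\cdots\vee x_k$ ($k\ge1$) grafts trees left to right on a new root; for $x=x^{(0)}\vee\cdots\vee x^{(k)}$, $y=y^{(0)}\vee\cdots\vee y^{(l)}$: $x\prec y=x^{(0)}\vee\cdots\vee x^{(k-1)}\vee(x^{(k)}*y)$, $x\cdot y=x^{(0)}\vee\cdots\vee x^{(k-1)}\vee(x^{(k)}*y^{(0)})\vee y^{(1)}\vee\cdots\vee y^{(l)}$, $x\succ y=(x*y^{(0)})\vee y^{(1)}\vee\cdots\vee y^{(l)}$, $*=\prec+\cdot+\succ$, $|*z=z*|=z$; for $a\in\mathcal A^+$: $|\prec a=0$, $a\prec|=a$, $|\succ a=a$, $a\succ|=0$, $|\cdot a=a\cdot|=0$. $\varepsilon(|)=1$, $\varepsilon(\mathcal A^+)=0$. A tridendriform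 ideal is a subspace $J$ such that $x\ltimes y\in J$ whenever $x\in J$ or $y\in J$ (and the product is defined), for $\ltimes\in\{\prec,\cdot,\succ\}$. Admissible cuts: internal edges join two internal vertices; a cut is a nonempty set of internal edges, plus the empty and total (below the root) cuts; admissible if every root-to-leaf path meets at most one chosen edge; $P^c(t)$ the component containing the root, $G^c(t)$ the $*$-product of the cut-off trees from left to right (empty cut: $P^c=t,G^c=|$; total cut: $P^c=|,G^c=t$). For $t\ne|$: $\Delta_\leftarrow(t)=\sum G^c(t)\otimes P^c(t)$ over admissible cuts with the right-most leaf of $t$ not in $P^c(t)$, $\Delta_\rightarrow(t)$ the sum over the other admissible cuts. *)

theory Defs
  imports "HOL-Library.Poly_Mapping" "HOL-Library.List_Lexorder" "HOL-Library.Sublist"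
begin

text \<open>Leaf is the one-leaf tree (written | in the paper);
  Node ts is a root vertex with the subtrees ts grafted from left to right.\<close>

datatype tree = Leaf | Node "tree list"

fun valid :: "tree \<Rightarrow> bool" where
  "valid Leaf = True"
| "valid (Node ts) = (2 \<le> length ts \<and> (\<forall>t\<in>set ts. valid t))"

type_synonym 'k alg = "tree \<Rightarrow>\<^sub>0 'k"

definition Alg :: "('k::field) alg set" where
  "Alg = {f. Poly_Mapping.keys f \<subseteq> {t. valid t}}"

definition Aplus :: "('k::field) alg set" where
  "Aplus = {f \<in> Alg. Poly_Mapping.lookup f Leaf = 0}"

definition eps :: "('k::field) alg \<Rightarrow> 'k" where
  "eps f = Poly_Mapping.lookup f Leaf"

definition smult :: "'k::field \<Rightarrow> ('a \<Rightarrow>\<^sub>0 'k) \<Rightarrow> ('a \<Rightarrow>\<^sub>0 'k)" where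
  "smult c f = (\<Sum>t\<in>Poly_Mapping.keys f. Poly_Mapping.single t (c * Poly_Mapping.lookup f t))"

definition graft :: "tree list \<Rightarrow> ('k::field) alg \<Rightarrow> tree list \<Rightarrow> 'k alg" where
  "graft ls f rs = (\<Sum>t\<in>Poly_Mapping.keys f. Poly_Mapping.single (Node (ls @ [t] @ rs)) (Poly_Mapping.lookup f t))"

lemma size_last_less: "xs \<noteq> [] \<Longrightarrow> size (last xs) < Suc (size_list size xs)"
  using size_list_estimation'[OF last_in_set, of xs "size (last xs)" size] by simp

lemma size_hd_less: "xs \<noteq> [] \<Longrightarrow> size (hd xs) < Suc (size_list size xs)"
  using size_list_estimation'[OF hd_in_set, of xs "size (hd xs)" size] by simp

function star0 :: "tree \<Rightarrow> tree \<Rightarrow> ('k::field) alg" where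
  "star0 Leaf z = Poly_Mapping.single z 1"
| "star0 (Node xs) Leaf = Poly_Mapping.single (Node xs) 1"
| "star0 (Node xs) (Node ys) =
     (if xs = [] \<or> ys = [] then 0 else
        graft (butlast xs) (star0 (last xs) (Node ys)) []
      + graft (butlast xs) (star0 (last xs) (hd ys)) (tl ys)
      + graft [] (star0 (Node xs) (hd ys)) (tl ys))"
  by pat_completeness auto
termination
proof (relation "measure (\<lambda>(x, y). size x + size y)", goal_cases)
  case 1 show ?case by simp
next
  case (2 xs ys) then show ?case using size_last_less[of xs] by simp
next
  case (3 xs ys) then show ?case using size_last_less[of xs] size_hd_less[of ys] by simp
next
  case (4 xs ys) then show ?case using size_hd_less[of ys] by simp
qed

text \<open>x \<prec> y, x \<cdot> y, x \<succ> y on basis trees. The case (Leaf, Leaf) is not defined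
  in the paper; it is never used (see the guards in tri_ideal).\<close>

fun prec0 :: "tree \<Rightarrow> tree \<Rightarrow> ('k::field) alg" where
  "prec0 Leaf y = 0"
| "prec0 (Node xs) Leaf = Poly_Mapping.single (Node xs) 1"
| "prec0 (Node xs) (Node ys) = graft (butlast xs) (star0 (last xs) (Node ys)) []"

fun dot0 :: "tree \<Rightarrow> tree \<Rightarrow> ('k::field) alg" where
  "dot0 Leaf y = 0"
| "dot0 (Node xs) Leaf = 0"
| "dot0 (Node xs) (Node ys) = graft (butlast xs) (star0 (last xs) (hd ys)) (tl ys)"

fun succ0 :: "tree \<Rightarrow> tree \<Rightarrow> ('k::field) alg" where
  "succ0 Leaf y = Poly_Mapping.single y 1"
| "succ0 (Node xs) Leaf = 0"
| "succ0 (Node xs) (Node ys) = graft [] (star0 (Node xs) (hd ys)) (tl ys)"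

definition bil :: "(tree \<Rightarrow> tree \<Rightarrow> ('k::field) alg) \<Rightarrow> 'k alg \<Rightarrow> 'k alg \<Rightarrow> 'k alg" where
  "bil op f g = (\<Sum>a\<in>Poly_Mapping.keys f. \<Sum>b\<in>Poly_Mapping.keys g. smult (Poly_Mapping.lookup f a * Poly_Mapping.lookup g b) (op a b))"

definition prec :: "('k::field) alg \<Rightarrow> 'k alg \<Rightarrow> 'k alg" where "prec = bil prec0"
definition dot :: "('k::field) alg \<Rightarrow> 'k alg \<Rightarrow> 'k alg" where "dot = bil dot0"
definition succ :: "('k::field) alg \<Rightarrow> 'k alg \<Rightarrow> 'k alg" where "succ = bil succ0"
definition star :: "('k::field) alg \<Rightarrow> 'k alg \<Rightarrow> 'k alg" where "star = bil star0"

inductive_set lspan :: "('a \<Rightarrow>\<^sub>0 'k::field) set \<Rightarrow> ('a \<Rightarrow>\<^sub>0 'k) set" for S where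
  zero: "0 \<in> lspan S"
| step: "x \<in> S \<Longrightarrow> y \<in> lspan S \<Longrightarrow> smult c x + y \<in> lspan S"

definition subspace_of :: "('a \<Rightarrow>\<^sub>0 'k::field) set \<Rightarrow> bool" where
  "subspace_of J = (lspan J = J)"

text \<open>A tridendriform ideal: a subspace J of A such that x \<ltimes> y \<in> J whenever x \<in> J or
  y \<in> J, for all products that are defined, i.e. with one factor in A+.\<close>
definition tri_ideal :: "('k::field) alg set \<Rightarrow> bool" where
  "tri_ideal J = (J \<subseteq> Alg \<and> subspace_of J \<and>
     (\<forall>x\<in>J. \<forall>y\<in>Alg. (x \<in> Aplus \<or> y \<in> Aplus) \<longrightarrow>
        (\<forall>op\<in>{prec, dot, succ}. op x y \<in> J \<and> op y x \<in> J)))"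

definition gen_ideal :: "('k::field) alg set \<Rightarrow> 'k alg set" where
  "gen_ideal G = \<Inter>{J. tri_ideal J \<and> G \<subseteq> J}"

fun subt :: "tree \<Rightarrow> nat list \<Rightarrow> tree option" where
  "subt t [] = Some t"
| "subt Leaf (i # p) = None"
| "subt (Node ts) (i # p) = (if i < length ts then subt (ts ! i) p else None)"

fun replace_at :: "tree \<Rightarrow> nat list \<Rightarrow> tree \<Rightarrow> tree" where
  "replace_at t [] s = s"
| "replace_at Leaf (i # p) s = Leaf"
| "replace_at (Node ts) (i # p) s =
     (if i < length ts then Node (ts[i := replace_at (ts ! i) p s]) else Node ts)"

text \<open>Internal edges of t correspond to positions p \<noteq> [] of non-root internal vertices
  (the internal edge is the one just below that vertex).\<close>
definition internal_edges :: "tree \<Rightarrow> nat list set" where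
  "internal_edges t = {p. p \<noteq> [] \<and> (\<exists>ts. subt t p = Some (Node ts))}"

datatype cut = Total | Edges "nat list set"

text \<open>Edges {} is the empty cut; Total the total cut. A set of internal edges is
  admissible iff every root-to-leaf path meets at most one of them, i.e. no chosen
  edge lies above another one (no position is a proper prefix of another).\<close>
fun admissible :: "tree \<Rightarrow> cut \<Rightarrow> bool" where
  "admissible t Total = True"
| "admissible t (Edges C) = (C \<subseteq> internal_edges t \<and>
     (\<forall>p\<in>C. \<forall>q\<in>C. prefix p q \<longrightarrow> p = q))"

fun Pc :: "tree \<Rightarrow> cut \<Rightarrow> tree" where
  "Pc t Total = Leaf"
| "Pc t (Edges C) = fold (\<lambda>p s. replace_at s p Leaf) (sorted_list_of_set C) t"

text \<open>Cut-off trees from left to right (lexicographic order on positions of an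
  antichain is the planar left-to-right order), multiplied with *.\<close>
fun Gc :: "tree \<Rightarrow> cut \<Rightarrow> ('k::field) alg" where
  "Gc t Total = Poly_Mapping.single t 1"
| "Gc t (Edges C) = foldl (\<lambda>g p. star g (Poly_Mapping.single (the (subt t p)) 1))
      (Poly_Mapping.single Leaf 1) (sorted_list_of_set C)"

function rm_leaf :: "tree \<Rightarrow> nat list" where
  "rm_leaf Leaf = []"
| "rm_leaf (Node ts) = (if ts = [] then [] else (length ts - 1) # rm_leaf (last ts))"
  by pat_completeness auto
termination
proof (relation "measure size", goal_cases)
  case 1 show ?case by simp
next
  case (2 ts) then show ?case using size_last_less[of ts] by simp
qed

text \<open>The right-most leaf of t lies in P^c(t) iff no cut edge lies on the path
  from the root to it.\<close>
fun rmleaf_in_P :: "tree \<Rightarrow> cut \<Rightarrow> bool" where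
  "rmleaf_in_P t Total = False"
| "rmleaf_in_P t (Edges C) = (\<forall>p\<in>C. \<not> prefix p (rm_leaf t))"

type_synonym 'k alg2 = "(tree \<times> tree) \<Rightarrow>\<^sub>0 'k"

definition tens :: "('k::field) alg \<Rightarrow> 'k alg \<Rightarrow> 'k alg2" where
  "tens f g = (\<Sum>a\<in>Poly_Mapping.keys f. \<Sum>b\<in>Poly_Mapping.keys g. Poly_Mapping.single (a, b) (Poly_Mapping.lookup f a * Poly_Mapping.lookup g b))"

definition DeltaL0 :: "tree \<Rightarrow> ('k::field) alg2" where
  "DeltaL0 t = (if t = Leaf then 0 else
     (\<Sum>c\<in>{c. admissible t c \<and> \<not> rmleaf_in_P t c}.
        tens (Gc t c) (Poly_Mapping.single (Pc t c) 1)))"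

definition DeltaR0 :: "tree \<Rightarrow> ('k::field) alg2" where
  "DeltaR0 t = (if t = Leaf then 0 else
     (\<Sum>c\<in>{c. admissible t c \<and> rmleaf_in_P t c}.
        tens (Gc t c) (Poly_Mapping.single (Pc t c) 1)))"

definition DeltaL :: "('k::field) alg \<Rightarrow> 'k alg2" where
  "DeltaL f = (\<Sum>t\<in>Poly_Mapping.keys f. smult (Poly_Mapping.lookup f t) (DeltaL0 t))"

definition DeltaR :: "('k::field) alg \<Rightarrow> 'k alg2" where
  "DeltaR f = (\<Sum>t\<in>Poly_Mapping.keys f. smult (Poly_Mapping.lookup f t) (DeltaR0 t))"

text \<open>I \<otimes> A + A \<otimes> I as a subspace of A \<otimes> A.\<close>
definition tens_sum :: "('k::field) alg set \<Rightarrow> 'k alg2 set" where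
  "tens_sum J = lspan ({tens x y | x y. x \<in> J \<and> y \<in> Alg} \<union> {tens y x | x y. x \<in> J \<and> y \<in> Alg})"

end

theory Submission imports Defs begin

(* I is the span of the trees having a vertex with at least three children. These trees span a
   tridendriform ideal, because \<prec>, \<cdot> and \<succ> only graft trees onto one another and never
   lower the arity of a vertex; it contains every x \<cdot> y, whose root has arity k + l + 1 \<ge> 3 when
   the roots of x and y have arities k + 1 and l + 1. Conversely such a tree lies in every
   ideal containing the generators: a root of arity \<ge> 3 splits it as a \<cdot>-product, and otherwise
   it is a \<succ>- or \<prec>-product with a smaller such tree. The one-leaf tree is not in the span,
   so \<epsilon>(I) = 0. In an admissible cut of such a tree, a vertex of arity \<ge> 3 lies either in a
   cut-off tree, and then G^c(t) \<in> I since I is closed under *, or in P^c(t). *)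

lemma lookup_smult [simp]: "Poly_Mapping.lookup (smult c f) x = c * Poly_Mapping.lookup f x"
proof -
  have "Poly_Mapping.lookup (smult c f) x =
        (\<Sum>t\<in>Poly_Mapping.keys f. if t = x then c * Poly_Mapping.lookup f t else 0)"
    unfolding smult_def lookup_sum by (intro sum.cong) (auto simp: lookup_single when_def)
  also have "\<dots> = c * Poly_Mapping.lookup f x"
    by (cases "x \<in> Poly_Mapping.keys f") (auto simp: in_keys_iff)
  finally show ?thesis .
qed

lemma smult_one [simp]: "smult 1 f = f"
  by (rule poly_mapping_eqI) simp

lemma smult_zero [simp]: "smult c 0 = 0"
  by (rule poly_mapping_eqI) simp

lemma smult_add: "smult c (f + g) = smult c f + smult c g"
  by (rule poly_mapping_eqI) (simp add: lookup_add algebra_simps)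

lemma smult_smult: "smult c (smult d f) = smult (c * d) f"
  by (rule poly_mapping_eqI) simp

lemma keys_smult: "Poly_Mapping.keys (smult c f) \<subseteq> Poly_Mapping.keys f"
  by (auto simp: in_keys_iff)

lemma sum_smult_single_keys:
  "(\<Sum>t\<in>Poly_Mapping.keys f. smult (Poly_Mapping.lookup f t) (Poly_Mapping.single t 1)) = f"
proof (rule poly_mapping_eqI)
  fix x
  have "Poly_Mapping.lookup
      (\<Sum>t\<in>Poly_Mapping.keys f. smult (Poly_Mapping.lookup f t) (Poly_Mapping.single t 1)) x
     = (\<Sum>t\<in>Poly_Mapping.keys f. if t = x then Poly_Mapping.lookup f t else 0)"
    unfolding lookup_sum by (intro sum.cong) (auto simp: lookup_single when_def)
  also have "\<dots> = Poly_Mapping.lookup f x"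
    by (cases "x \<in> Poly_Mapping.keys f") (auto simp: in_keys_iff)
  finally show "Poly_Mapping.lookup
      (\<Sum>t\<in>Poly_Mapping.keys f. smult (Poly_Mapping.lookup f t) (Poly_Mapping.single t 1)) x
     = Poly_Mapping.lookup f x" .
qed

lemma keys_add3:
  "k \<in> Poly_Mapping.keys (a + b + c) \<Longrightarrow>
   k \<in> Poly_Mapping.keys a \<or> k \<in> Poly_Mapping.keys b \<or> k \<in> Poly_Mapping.keys c"
  using keys_add[of "a + b" c] keys_add[of a b] by blast

lemma lspan_base: "x \<in> S \<Longrightarrow> x \<in> lspan S"
  using lspan.step[of x S 0 1] by (simp add: lspan.zero)

lemma lspan_add: "x \<in> lspan S \<Longrightarrow> y \<in> lspan S \<Longrightarrow> x + y \<in> lspan S"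
  by (induction x rule: lspan.induct) (auto simp: add.assoc intro: lspan.step)

lemma lspan_smult: "x \<in> lspan S \<Longrightarrow> smult c x \<in> lspan S"
  by (induction x rule: lspan.induct) (auto simp: smult_add smult_smult intro: lspan.step lspan.zero)

lemma lspan_sum: "(\<And>i. i \<in> A \<Longrightarrow> f i \<in> lspan S) \<Longrightarrow> sum f A \<in> lspan S"
  by (induction A rule: infinite_finite_induct) (auto intro: lspan.zero lspan_add)

lemma subspace_ofI:
  assumes "0 \<in> S" "\<And>x y. x \<in> S \<Longrightarrow> y \<in> S \<Longrightarrow> x + y \<in> S" "\<And>c x. x \<in> S \<Longrightarrow> smult c x \<in> S"
  shows "subspace_of S"
proof -
  have "x \<in> S" if "x \<in> lspan S" for x
    using that by induction (use assms in auto)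
  then show ?thesis unfolding subspace_of_def using lspan_base by blast
qed

lemma subspace_of_basis_closed:
  assumes "subspace_of J" "\<And>t. t \<in> Poly_Mapping.keys f \<Longrightarrow> Poly_Mapping.single t 1 \<in> J"
  shows "f \<in> J"
proof -
  have "(\<Sum>t\<in>Poly_Mapping.keys f. smult (Poly_Mapping.lookup f t) (Poly_Mapping.single t 1)) \<in> lspan J"
    by (intro lspan_sum lspan_smult lspan_base assms(2))
  then show ?thesis using assms(1) unfolding subspace_of_def sum_smult_single_keys by simp
qed

lemma single_Alg: "valid t \<Longrightarrow> Poly_Mapping.single t 1 \<in> Alg"
  unfolding Alg_def by simp

lemma single_Aplus: "valid t \<Longrightarrow> t \<noteq> Leaf \<Longrightarrow> Poly_Mapping.single t 1 \<in> Aplus"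
  unfolding Aplus_def by (simp add: single_Alg lookup_single_not_eq)

lemma keys_graft: "Poly_Mapping.keys (graft ls f rs) \<subseteq> (\<lambda>s. Node (ls @ [s] @ rs)) ` Poly_Mapping.keys f"
proof -
  have "Poly_Mapping.keys (graft ls f rs) \<subseteq> (\<Union>t\<in>Poly_Mapping.keys f. Poly_Mapping.keys
     (Poly_Mapping.single (Node (ls @ [t] @ rs)) (Poly_Mapping.lookup f t)))"
    unfolding graft_def by (rule keys_sum)
  then show ?thesis by (auto split: if_splits)
qed

lemma graft_single: "graft ls (Poly_Mapping.single s 1) rs = Poly_Mapping.single (Node (ls @ [s] @ rs)) 1"
  unfolding graft_def by simp

lemma bil_single: "bil op (Poly_Mapping.single a 1) (Poly_Mapping.single b 1) = op a b"
  unfolding bil_def by simp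

lemma keys_bil: "Poly_Mapping.keys (bil op f g) \<subseteq>
   (\<Union>a\<in>Poly_Mapping.keys f. \<Union>b\<in>Poly_Mapping.keys g. Poly_Mapping.keys (op a b))"
proof -
  let ?c = "\<lambda>a b. Poly_Mapping.lookup f a * Poly_Mapping.lookup g b"
  have "Poly_Mapping.keys (bil op f g) \<subseteq> (\<Union>a\<in>Poly_Mapping.keys f.
      Poly_Mapping.keys (\<Sum>b\<in>Poly_Mapping.keys g. smult (?c a b) (op a b)))"
    unfolding bil_def by (rule keys_sum)
  also have "\<dots> \<subseteq> (\<Union>a\<in>Poly_Mapping.keys f. \<Union>b\<in>Poly_Mapping.keys g.
      Poly_Mapping.keys (smult (?c a b) (op a b)))"
    by (intro UN_mono order_refl keys_sum)
  also have "\<dots> \<subseteq> (\<Union>a\<in>Poly_Mapping.keys f. \<Union>b\<in>Poly_Mapping.keys g. Poly_Mapping.keys (op a b))"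
    by (intro UN_mono order_refl keys_smult)
  finally show ?thesis .
qed

lemma keys_bilE:
  assumes "t \<in> Poly_Mapping.keys (bil op f g)"
  obtains a b where "a \<in> Poly_Mapping.keys f" "b \<in> Poly_Mapping.keys g" "t \<in> Poly_Mapping.keys (op a b)"
  using assms keys_bil[of op f g] by blast

section \<open>Trees with a vertex of arity at least three\<close>

fun nonbinary :: "tree \<Rightarrow> bool" where
  "nonbinary Leaf = False"
| "nonbinary (Node ts) = (3 \<le> length ts \<or> (\<exists>t\<in>set ts. nonbinary t))"

definition Nonbinary :: "('k::field) alg set" where
  "Nonbinary = {f \<in> Alg. \<forall>t\<in>Poly_Mapping.keys f. nonbinary t}"

lemma valid_Node_nonempty: "valid (Node ts) \<Longrightarrow> ts \<noteq> []"
  by auto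

lemma valid_last_hd: "valid (Node ts) \<Longrightarrow> valid (last ts) \<and> valid (hd ts)"
  by (cases ts) auto

lemma keys_graft_butlast:
  assumes "valid (Node xs)" and t: "t \<in> Poly_Mapping.keys (graft (butlast xs) g [])"
    and g: "\<And>s. s \<in> Poly_Mapping.keys g \<Longrightarrow> valid s \<and> (nonbinary (last xs) \<or> P \<longrightarrow> nonbinary s)"
  shows "valid t \<and> (nonbinary (Node xs) \<or> P \<longrightarrow> nonbinary t)"
proof -
  obtain s where s: "s \<in> Poly_Mapping.keys g" "t = Node (butlast xs @ [s])"
    using t keys_graft by fastforce
  have xs: "xs = butlast xs @ [last xs]" using valid_Node_nonempty[OF assms(1)] by simp
  then have "length (butlast xs @ [s]) = length xs" by (metis length_append_singleton)
  moreover have "set xs = insert (last xs) (set (butlast xs))" using xs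
    by (metis Un_insert_right append.right_neutral list.simps(15) set_append)
  ultimately show ?thesis using assms(1) g[OF s(1)] s(2) by auto
qed

lemma keys_graft_tl:
  assumes "valid (Node ys)" and t: "t \<in> Poly_Mapping.keys (graft [] g (tl ys))"
    and g: "\<And>s. s \<in> Poly_Mapping.keys g \<Longrightarrow> valid s \<and> (P \<or> nonbinary (hd ys) \<longrightarrow> nonbinary s)"
  shows "valid t \<and> (P \<or> nonbinary (Node ys) \<longrightarrow> nonbinary t)"
proof -
  obtain s where s: "s \<in> Poly_Mapping.keys g" "t = Node (s # tl ys)"
    using t keys_graft by fastforce
  obtain y ys' where "ys = y # ys'" using assms(1) by (cases ys) auto
  then show ?thesis using assms(1) g[OF s(1)] s(2) by auto
qed

lemma keys_graft_butlast_tl: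
  assumes "valid (Node xs)" "valid (Node ys)"
    and t: "t \<in> Poly_Mapping.keys (graft (butlast xs) g (tl ys))"
    and g: "\<And>s. s \<in> Poly_Mapping.keys g \<Longrightarrow> valid s"
  shows "valid t \<and> nonbinary t"
proof -
  obtain s where s: "s \<in> Poly_Mapping.keys g" "t = Node (butlast xs @ [s] @ tl ys)"
    using t keys_graft by blast
  obtain y ys' where "ys = y # ys'" using assms(2) by (cases ys) auto
  then show ?thesis using assms(1,2) g[OF s(1)] s(2) by (auto dest: in_set_butlastD)
qed

definition keeps_nonbinary :: "(tree \<Rightarrow> tree \<Rightarrow> ('k::field) alg) \<Rightarrow> bool" where
  "keeps_nonbinary op \<longleftrightarrow> (\<forall>a b t. valid a \<longrightarrow> valid b \<longrightarrow> t \<in> Poly_Mapping.keys (op a b) \<longrightarrow>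
     valid t \<and> (nonbinary a \<or> nonbinary b \<longrightarrow> nonbinary t))"

lemma keeps_nonbinaryD:
  "keeps_nonbinary op \<Longrightarrow> valid a \<Longrightarrow> valid b \<Longrightarrow> t \<in> Poly_Mapping.keys (op a b) \<Longrightarrow>
   valid t \<and> (nonbinary a \<or> nonbinary b \<longrightarrow> nonbinary t)"
  unfolding keeps_nonbinary_def by blast

lemma keeps_nonbinary_star0: "keeps_nonbinary star0"
  unfolding keeps_nonbinary_def
proof (intro allI impI)
  fix a b t
  show "valid a \<Longrightarrow> valid b \<Longrightarrow> t \<in> Poly_Mapping.keys (star0 a b :: ('k::field) alg) \<Longrightarrow>
    valid t \<and> (nonbinary a \<or> nonbinary b \<longrightarrow> nonbinary t)"
  proof (induction a b arbitrary: t rule: star0.induct)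
    case (3 xs ys)
    have ne: "xs \<noteq> []" "ys \<noteq> []" and vl: "valid (last xs)" and vh: "valid (hd ys)"
      using "3.prems"(1,2) valid_last_hd by auto
    from "3.prems"(3) ne consider
        "t \<in> Poly_Mapping.keys (graft (butlast xs) (star0 (last xs) (Node ys) :: 'k alg) [])"
      | "t \<in> Poly_Mapping.keys (graft (butlast xs) (star0 (last xs) (hd ys) :: 'k alg) (tl ys))"
      | "t \<in> Poly_Mapping.keys (graft [] (star0 (Node xs) (hd ys) :: 'k alg) (tl ys))"
      by (auto dest: keys_add3)
    then show ?case
    proof cases
      case 1
      then show ?thesis using keys_graft_butlast "3.IH"(1) ne vl "3.prems" by blast
    next
      case 2
      then show ?thesis using keys_graft_butlast_tl "3.IH"(2) ne vl vh "3.prems" by blast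
    next
      case 3
      then show ?thesis using keys_graft_tl "3.IH"(3) ne vh "3.prems" by blast
    qed
  qed simp_all
qed

lemmas keys_star0D = keeps_nonbinaryD[OF keeps_nonbinary_star0]

lemma keeps_nonbinary_prec0: "keeps_nonbinary prec0"
  unfolding keeps_nonbinary_def
proof (intro allI impI)
  fix a b t assume va: "valid a" and vb: "valid b" and t: "t \<in> Poly_Mapping.keys (prec0 a b :: ('k::field) alg)"
  show "valid t \<and> (nonbinary a \<or> nonbinary b \<longrightarrow> nonbinary t)"
  proof (cases "a = Leaf \<or> b = Leaf")
    case True
    then show ?thesis using va t by (cases a) auto
  next
    case False
    then obtain xs ys where ab: "a = Node xs" "b = Node ys" by (cases a; cases b) auto
    have vl: "valid (last xs)" using va ab valid_last_hd by blast
    show ?thesis using t unfolding ab prec0.simps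
      by (rule keys_graft_butlast[OF va[unfolded ab]])
        (use keys_star0D[OF vl vb[unfolded ab]] in blast)
  qed
qed

lemma keeps_nonbinary_succ0: "keeps_nonbinary succ0"
  unfolding keeps_nonbinary_def
proof (intro allI impI)
  fix a b t assume va: "valid a" and vb: "valid b" and t: "t \<in> Poly_Mapping.keys (succ0 a b :: ('k::field) alg)"
  show "valid t \<and> (nonbinary a \<or> nonbinary b \<longrightarrow> nonbinary t)"
  proof (cases "a = Leaf \<or> b = Leaf")
    case True
    then show ?thesis using vb t by (cases a) auto
  next
    case False
    then obtain xs ys where ab: "a = Node xs" "b = Node ys" by (cases a; cases b) auto
    have vh: "valid (hd ys)" using vb ab valid_last_hd by blast
    show ?thesis using t unfolding ab succ0.simps
      by (rule keys_graft_tl[OF vb[unfolded ab]])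
        (use keys_star0D[OF va[unfolded ab] vh] in blast)
  qed
qed

lemma keys_dot0:
  assumes "valid a" "valid b" "t \<in> Poly_Mapping.keys (dot0 a b :: ('k::field) alg)"
  shows "valid t \<and> nonbinary t"
proof -
  obtain xs ys where ab: "a = Node xs" "b = Node ys"
    using assms(3) by (cases a; cases b) auto
  have "valid (last xs)" "valid (hd ys)" using assms(1,2) ab valid_last_hd by blast+
  then show ?thesis using assms(3) unfolding ab dot0.simps
    by (intro keys_graft_butlast_tl[OF assms(1,2)[unfolded ab]]) (use keys_star0D in blast)+
qed

lemma keeps_nonbinary_dot0: "keeps_nonbinary dot0"
  unfolding keeps_nonbinary_def using keys_dot0 by blast

lemma single_Nonbinary: "valid t \<Longrightarrow> nonbinary t \<Longrightarrow> Poly_Mapping.single t 1 \<in> Nonbinary"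
  unfolding Nonbinary_def by (simp add: single_Alg)

lemma Nonbinary_subset_Aplus: "Nonbinary \<subseteq> Aplus"
  unfolding Nonbinary_def Aplus_def by (force simp: in_keys_iff)

lemma subspace_of_Nonbinary: "subspace_of (Nonbinary :: ('k::field) alg set)"
proof (rule subspace_ofI)
  show "0 \<in> (Nonbinary :: 'k alg set)" by (simp add: Nonbinary_def Alg_def)
  show "f + g \<in> Nonbinary" if "f \<in> Nonbinary" "g \<in> Nonbinary" for f g :: "'k alg"
    using that keys_add[of f g] unfolding Nonbinary_def Alg_def by blast
  show "smult c f \<in> Nonbinary" if "f \<in> Nonbinary" for c and f :: "'k alg"
    using that keys_smult[of c f] unfolding Nonbinary_def Alg_def by blast
qed

lemma bil_Alg:
  assumes "keeps_nonbinary op" "f \<in> Alg" "g \<in> Alg"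
  shows "bil op f g \<in> Alg"
proof -
  have "valid t" if t: "t \<in> Poly_Mapping.keys (bil op f g)" for t
  proof -
    obtain a b where ab: "a \<in> Poly_Mapping.keys f" "b \<in> Poly_Mapping.keys g"
      "t \<in> Poly_Mapping.keys (op a b)"
      using t by (rule keys_bilE)
    have "valid a" "valid b" using ab(1,2) assms(2,3) unfolding Alg_def by blast+
    then show ?thesis using keeps_nonbinaryD[OF assms(1) _ _ ab(3)] by blast
  qed
  then show ?thesis unfolding Alg_def by blast
qed

lemma bil_Nonbinary:
  assumes "keeps_nonbinary op" "f \<in> Alg" "g \<in> Alg" "f \<in> Nonbinary \<or> g \<in> Nonbinary"
  shows "bil op f g \<in> Nonbinary"
proof -
  have "nonbinary t" if t: "t \<in> Poly_Mapping.keys (bil op f g)" for t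
  proof -
    obtain a b where ab: "a \<in> Poly_Mapping.keys f" "b \<in> Poly_Mapping.keys g"
      "t \<in> Poly_Mapping.keys (op a b)"
      using t by (rule keys_bilE)
    have "valid a" "valid b" using ab(1,2) assms(2,3) unfolding Alg_def by blast+
    moreover have "nonbinary a \<or> nonbinary b" using ab(1,2) assms(4) unfolding Nonbinary_def by blast
    ultimately show ?thesis using keeps_nonbinaryD[OF assms(1) _ _ ab(3)] by blast
  qed
  then show ?thesis using bil_Alg[OF assms(1-3)] unfolding Nonbinary_def by blast
qed

lemma dot_Nonbinary:
  fixes f g :: "('k::field) alg"
  assumes "f \<in> Alg" "g \<in> Alg"
  shows "dot f g \<in> Nonbinary"
proof -
  have "nonbinary t" if t: "t \<in> Poly_Mapping.keys (dot f g)" for t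
  proof -
    obtain a b where ab: "a \<in> Poly_Mapping.keys f" "b \<in> Poly_Mapping.keys g"
      "t \<in> Poly_Mapping.keys (dot0 a b :: 'k alg)"
      using t unfolding dot_def by (rule keys_bilE)
    have "valid a" "valid b" using ab(1,2) assms unfolding Alg_def by blast+
    then show ?thesis using keys_dot0 ab(3) by blast
  qed
  then show ?thesis
    using bil_Alg[OF keeps_nonbinary_dot0 assms] unfolding Nonbinary_def dot_def by blast
qed

lemma tri_ideal_Nonbinary: "tri_ideal (Nonbinary :: ('k::field) alg set)"
  unfolding tri_ideal_def
proof (intro conjI subspace_of_Nonbinary)
  show "Nonbinary \<subseteq> Alg" by (auto simp: Nonbinary_def)
  have closed: "bil op0 x y \<in> Nonbinary \<and> bil op0 y x \<in> Nonbinary"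
    if "keeps_nonbinary op0" "x \<in> Nonbinary" "y \<in> Alg" for op0 and x y :: "'k alg"
    using bil_Nonbinary[OF that(1)] that(2,3) unfolding Nonbinary_def by blast
  show "\<forall>x\<in>Nonbinary :: 'k alg set. \<forall>y\<in>Alg. x \<in> Aplus \<or> y \<in> Aplus \<longrightarrow>
      (\<forall>op\<in>{prec, dot, succ}. op x y \<in> Nonbinary \<and> op y x \<in> Nonbinary)"
  proof (intro ballI impI)
    fix x y :: "'k alg" and op :: "'k alg \<Rightarrow> 'k alg \<Rightarrow> 'k alg"
    assume xy: "x \<in> Nonbinary" "y \<in> Alg" and "op \<in> {prec, dot, succ}"
    then consider "op = prec" | "op = dot" | "op = succ" by blast
    then show "op x y \<in> Nonbinary \<and> op y x \<in> Nonbinary"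
      unfolding prec_def dot_def succ_def
      by cases (simp_all add: closed[OF keeps_nonbinary_prec0 xy] closed[OF keeps_nonbinary_dot0 xy]
          closed[OF keeps_nonbinary_succ0 xy])
  qed
qed

section \<open>The ideal generated by the products x \<cdot> y\<close>

lemma star0_Leaf: "star0 t Leaf = Poly_Mapping.single t 1"
  by (cases t) simp_all

lemma dot_single_Node:
  "dot (Poly_Mapping.single (Node [t0, t1]) 1) (Poly_Mapping.single (Node (Leaf # t2 # ts)) 1)
   = (Poly_Mapping.single (Node (t0 # t1 # t2 # ts)) 1 :: ('k::field) alg)"
  unfolding dot_def bil_single by (simp add: star0_Leaf graft_single)

lemma succ_single_Node:
  "succ (Poly_Mapping.single (Node as) 1) (Poly_Mapping.single (Node [Leaf, b]) 1)
   = (Poly_Mapping.single (Node [Node as, b]) 1 :: ('k::field) alg)"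
  unfolding succ_def bil_single by (simp add: graft_single)

lemma prec_single_Node:
  "prec (Poly_Mapping.single (Node [a, Leaf]) 1) (Poly_Mapping.single (Node bs) 1)
   = (Poly_Mapping.single (Node [a, Node bs]) 1 :: ('k::field) alg)"
  unfolding prec_def bil_single by (simp add: graft_single)

lemma tri_idealD:
  "tri_ideal J \<Longrightarrow> x \<in> J \<Longrightarrow> y \<in> Alg \<Longrightarrow> x \<in> Aplus \<Longrightarrow> op \<in> {prec, dot, succ} \<Longrightarrow>
   op x y \<in> J \<and> op y x \<in> J"
  unfolding tri_ideal_def by blast

lemma nonbinary_Node_cases:
  assumes "valid (Node ts)" "nonbinary (Node ts)"
  obtains t0 t1 t2 rest where "ts = t0 # t1 # t2 # rest"
    | a b where "ts = [a, b]" "nonbinary a"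
    | a b where "ts = [a, b]" "nonbinary b"
proof (cases ts rule: remdups_adj.cases)
  case (3 x y xs)
  then show ?thesis using that assms by (cases xs) auto
qed (use assms in auto)

lemma single_nonbinary_in_tri_ideal:
  fixes J :: "('k::field) alg set"
  assumes J: "tri_ideal J" and gen: "{dot x y | x y. x \<in> Aplus \<and> y \<in> Aplus} \<subseteq> J"
  shows "valid t \<Longrightarrow> nonbinary t \<Longrightarrow> Poly_Mapping.single t 1 \<in> J"
proof (induction t)
  case (Node ts)
  from Node.prems show ?case
  proof (cases rule: nonbinary_Node_cases)
    case (1 t0 t1 t2 rest)
    have "valid (Node [t0, t1])" "valid (Node (Leaf # t2 # rest))"
      using Node.prems(1) unfolding 1 by simp_all
    then have "Poly_Mapping.single (Node [t0, t1]) 1 \<in> (Aplus :: 'k alg set)"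
      "Poly_Mapping.single (Node (Leaf # t2 # rest)) 1 \<in> (Aplus :: 'k alg set)"
      by (simp_all add: single_Aplus)
    then have "dot (Poly_Mapping.single (Node [t0, t1]) 1)
        (Poly_Mapping.single (Node (Leaf # t2 # rest)) 1) \<in> J"
      using gen by blast
    then show ?thesis unfolding 1 dot_single_Node .
  next
    case (2 a b)
    then obtain as where a: "a = Node as" by (cases a) auto
    have v: "valid a" "valid (Node [Leaf, b])" using Node.prems(1) unfolding 2 by simp_all
    have "Poly_Mapping.single a 1 \<in> J" using Node.IH[of a] v(1) 2 by simp
    moreover have "Poly_Mapping.single (Node [Leaf, b]) 1 \<in> (Alg :: 'k alg set)"
      "Poly_Mapping.single a 1 \<in> (Aplus :: 'k alg set)"
      using v a by (simp_all add: single_Aplus single_Alg)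
    ultimately have "succ (Poly_Mapping.single a 1) (Poly_Mapping.single (Node [Leaf, b]) 1) \<in> J"
      using tri_idealD[OF J] by simp
    then show ?thesis unfolding 2 a succ_single_Node .
  next
    case (3 a b)
    then obtain bs where b: "b = Node bs" by (cases b) auto
    have v: "valid b" "valid (Node [a, Leaf])" using Node.prems(1) unfolding 3 by simp_all
    have "Poly_Mapping.single b 1 \<in> J" using Node.IH[of b] v(1) 3 by simp
    moreover have "Poly_Mapping.single (Node [a, Leaf]) 1 \<in> (Alg :: 'k alg set)"
      "Poly_Mapping.single b 1 \<in> (Aplus :: 'k alg set)"
      using v b by (simp_all add: single_Aplus single_Alg)
    ultimately have "prec (Poly_Mapping.single (Node [a, Leaf]) 1) (Poly_Mapping.single b 1) \<in> J"
      using tri_idealD[OF J] by simp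
    then show ?thesis unfolding 3 b prec_single_Node .
  qed
qed simp

lemma gen_ideal_dot_Aplus:
  "gen_ideal {dot x y | x y. x \<in> Aplus \<and> y \<in> Aplus} = (Nonbinary :: ('k::field) alg set)"
proof
  have "{dot x y | x y. x \<in> Aplus \<and> y \<in> Aplus} \<subseteq> (Nonbinary :: 'k alg set)"
    using dot_Nonbinary unfolding Aplus_def by blast
  then show "gen_ideal {dot x y | x y. x \<in> Aplus \<and> y \<in> Aplus} \<subseteq> (Nonbinary :: 'k alg set)"
    unfolding gen_ideal_def using tri_ideal_Nonbinary by blast
next
  have "f \<in> J" if "tri_ideal J" "{dot x y | x y. x \<in> Aplus \<and> y \<in> Aplus} \<subseteq> J"
    "f \<in> Nonbinary" for J and f :: "'k alg"
  proof (rule subspace_of_basis_closed)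
    show "subspace_of J" using that(1) unfolding tri_ideal_def by blast
    show "Poly_Mapping.single t 1 \<in> J" if "t \<in> Poly_Mapping.keys f" for t
      using single_nonbinary_in_tri_ideal[OF \<open>tri_ideal J\<close> \<open>_ \<subseteq> J\<close>] \<open>f \<in> Nonbinary\<close> that
      unfolding Nonbinary_def Alg_def by blast
  qed
  then show "(Nonbinary :: 'k alg set) \<subseteq> gen_ideal {dot x y | x y. x \<in> Aplus \<and> y \<in> Aplus}"
    unfolding gen_ideal_def by blast
qed

section \<open>Admissible cuts of trees with a vertex of arity at least three\<close>

lemma valid_subt: "valid t \<Longrightarrow> subt t p = Some s \<Longrightarrow> valid s"
proof (induction t p rule: subt.induct)
  case (3 ts i p)
  then show ?case by (auto split: if_splits)
qed simp_all

lemma valid_replace_at_Leaf: "valid t \<Longrightarrow> valid (replace_at t p Leaf)"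
proof (induction t p Leaf rule: replace_at.induct)
  case (3 ts i p)
  then show ?case by (auto dest!: subsetD[OF set_update_subset_insert])
qed simp_all

lemma nonbinary_replace_at_Leaf:
  "subt t p = Some u \<Longrightarrow> \<not> nonbinary u \<Longrightarrow> nonbinary t \<Longrightarrow> nonbinary (replace_at t p Leaf)"
proof (induction t p Leaf rule: replace_at.induct)
  case (3 ts i p)
  then have i: "i < length ts" by (simp split: if_splits)
  let ?r = "replace_at (ts ! i) p Leaf"
  from "3.prems"(3) consider "3 \<le> length ts" | j where "j < length ts" "nonbinary (ts ! j)"
    by (auto simp: in_set_conv_nth)
  then show ?case
  proof cases
    case (2 j)
    have "nonbinary (ts[i := ?r] ! j)"
      using 2 "3.hyps"[OF i] "3.prems"(1,2) i by (cases "j = i") auto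
    then show ?thesis using 2 i by (auto intro: nth_mem)
  qed (use i in simp)
qed simp_all

lemma subt_replace_at_other:
  "\<not> prefix q p \<Longrightarrow> \<not> prefix p q \<Longrightarrow> subt (replace_at t p s) q = subt t q"
proof (induction t p s arbitrary: q rule: replace_at.induct)
  case (3 ts i p s)
  then obtain j q' where q: "q = j # q'" by (cases q) auto
  then show ?case using 3 by (cases "j = i") auto
qed auto

lemma valid_fold_replace_at_Leaf: "valid t \<Longrightarrow> valid (fold (\<lambda>p s. replace_at s p Leaf) ps t)"
  by (induction ps arbitrary: t) (auto intro: valid_replace_at_Leaf)

lemma nonbinary_fold_replace_at_Leaf:
  assumes "distinct ps" "\<forall>p\<in>set ps. \<forall>q\<in>set ps. prefix p q \<longrightarrow> p = q"
    "\<forall>p\<in>set ps. \<exists>u. subt t p = Some u \<and> \<not> nonbinary u" "nonbinary t"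
  shows "nonbinary (fold (\<lambda>p s. replace_at s p Leaf) ps t)"
  using assms
proof (induction ps arbitrary: t)
  case (Cons p ps)
  let ?t = "replace_at t p Leaf"
  have "nonbinary ?t" using Cons.prems(3,4) nonbinary_replace_at_Leaf by auto
  moreover have "subt ?t q = subt t q" if "q \<in> set ps" for q
    using Cons.prems(1,2) that by (intro subt_replace_at_other) auto
  ultimately show ?case using Cons.IH[of ?t] Cons.prems(1-3) by simp
qed simp

lemma star_Alg: "f \<in> Alg \<Longrightarrow> g \<in> Alg \<Longrightarrow> star f g \<in> Alg"
  unfolding star_def by (rule bil_Alg[OF keeps_nonbinary_star0])

lemma star_Nonbinary:
  "f \<in> Alg \<Longrightarrow> g \<in> Alg \<Longrightarrow> f \<in> Nonbinary \<or> g \<in> Nonbinary \<Longrightarrow> star f g \<in> Nonbinary"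
  unfolding star_def by (rule bil_Nonbinary[OF keeps_nonbinary_star0])

lemma foldl_star_Alg:
  "g \<in> Alg \<Longrightarrow> \<forall>p\<in>set ps. h p \<in> Alg \<Longrightarrow> foldl (\<lambda>g p. star g (h p)) g ps \<in> Alg"
  by (induction ps arbitrary: g) (auto intro: star_Alg)

lemma foldl_star_Nonbinary:
  "g \<in> Alg \<Longrightarrow> \<forall>p\<in>set ps. h p \<in> Alg \<Longrightarrow> g \<in> Nonbinary \<or> (\<exists>p\<in>set ps. h p \<in> Nonbinary) \<Longrightarrow>
   foldl (\<lambda>g p. star g (h p)) g ps \<in> Nonbinary"
proof (induction ps arbitrary: g)
  case (Cons p ps)
  have "star g (h p) \<in> Alg" using Cons.prems(1,2) by (simp add: star_Alg)
  moreover have "star g (h p) \<in> Nonbinary \<or> (\<exists>q\<in>set ps. h q \<in> Nonbinary)"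
    using Cons.prems star_Nonbinary by auto
  ultimately show ?case using Cons.IH Cons.prems(2) by simp
qed simp

lemma set_sorted_list_of_set_subset: "set (sorted_list_of_set C) \<subseteq> C"
  by (cases "finite C") auto

lemma valid_Pc: "valid t \<Longrightarrow> valid (Pc t c)"
  by (cases c) (simp_all add: valid_fold_replace_at_Leaf)

lemma admissible_subt:
  assumes "admissible t (Edges C)" "p \<in> C"
  obtains ts where "subt t p = Some (Node ts)"
proof -
  have "p \<in> internal_edges t" using assms by auto
  then show ?thesis using that unfolding internal_edges_def by blast
qed

lemma Gc_Alg:
  assumes "valid t" "admissible t c"
  shows "Gc t c \<in> Alg"
proof (cases c)
  case (Edges C)
  have "valid (the (subt t p))" if "p \<in> set (sorted_list_of_set C)" for p
    using that set_sorted_list_of_set_subset assms valid_subt unfolding Edges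
    by (metis admissible_subt option.sel subsetD)
  then show ?thesis unfolding Edges
    by (auto intro!: foldl_star_Alg single_Alg)
qed (use assms in \<open>simp add: single_Alg\<close>)

lemma Gc_Nonbinary:
  assumes "valid t" "admissible t (Edges C)" "p \<in> set (sorted_list_of_set C)"
    "nonbinary (the (subt t p))"
  shows "Gc t (Edges C) \<in> Nonbinary"
proof -
  have "valid (the (subt t q))" if "q \<in> set (sorted_list_of_set C)" for q
    using that set_sorted_list_of_set_subset assms(1,2) valid_subt
    by (metis admissible_subt option.sel subsetD)
  then show ?thesis
    using assms(3,4) by (auto intro!: foldl_star_Nonbinary single_Alg single_Nonbinary)
qed

lemma Pc_nonbinary:
  assumes "nonbinary t" "admissible t (Edges C)"
    "\<forall>p\<in>set (sorted_list_of_set C). \<not> nonbinary (the (subt t p))"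
  shows "nonbinary (Pc t (Edges C))"
  unfolding Pc.simps
proof (rule nonbinary_fold_replace_at_Leaf[OF _ _ _ assms(1)])
  let ?ps = "sorted_list_of_set C"
  show "distinct ?ps" by simp
  show "\<forall>p\<in>set ?ps. \<forall>q\<in>set ?ps. prefix p q \<longrightarrow> p = q"
    using assms(2) set_sorted_list_of_set_subset[of C] by auto
  show "\<forall>p\<in>set ?ps. \<exists>u. subt t p = Some u \<and> \<not> nonbinary u"
    using assms(2,3) set_sorted_list_of_set_subset by (metis admissible_subt option.sel subsetD)
qed

lemma cut_Nonbinary:
  assumes "valid t" "nonbinary t" "admissible t c"
  shows "(Gc t c \<in> (Nonbinary :: ('k::field) alg set) \<and> Poly_Mapping.single (Pc t c) 1 \<in> (Alg :: 'k alg set)) \<or>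
         (Gc t c \<in> (Alg :: 'k alg set) \<and> Poly_Mapping.single (Pc t c) 1 \<in> (Nonbinary :: 'k alg set))"
proof (cases c)
  case Total
  then show ?thesis using assms(1,2) by (simp add: single_Alg single_Nonbinary)
next
  case (Edges C)
  have "valid (Pc t c)" using assms(1) by (rule valid_Pc)
  moreover have "Gc t c \<in> (Alg :: 'k alg set)" using assms(1,3) by (rule Gc_Alg)
  moreover have "Gc t c \<in> (Nonbinary :: 'k alg set) \<or> nonbinary (Pc t c)"
    using Gc_Nonbinary[OF assms(1)] Pc_nonbinary[OF assms(2)] assms(3) unfolding Edges by blast
  ultimately show ?thesis using single_Alg single_Nonbinary by blast
qed

lemma sum_cuts_tens_sum_Nonbinary:
  assumes "valid t" "nonbinary t" "\<And>c. c \<in> S \<Longrightarrow> admissible t c"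
  shows "(\<Sum>c\<in>S. tens (Gc t c) (Poly_Mapping.single (Pc t c) 1)) \<in> tens_sum (Nonbinary :: ('k::field) alg set)"
  unfolding tens_sum_def
proof (intro lspan_sum lspan_base)
  fix c assume "c \<in> S"
  then show "tens (Gc t c) (Poly_Mapping.single (Pc t c) 1) \<in>
      {tens x y | x y. x \<in> (Nonbinary :: 'k alg set) \<and> y \<in> Alg} \<union> {tens y x | x y. x \<in> Nonbinary \<and> y \<in> Alg}"
    using cut_Nonbinary[OF assms(1,2) assms(3), where 'k='k] by blast
qed

lemma Delta0_tens_sum_Nonbinary:
  assumes "valid t" "nonbinary t"
  shows "DeltaL0 t \<in> tens_sum (Nonbinary :: ('k::field) alg set)"
    and "DeltaR0 t \<in> tens_sum (Nonbinary :: ('k::field) alg set)"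
  using assms unfolding DeltaL0_def DeltaR0_def
  by (auto intro!: sum_cuts_tens_sum_Nonbinary)

lemma Delta_tens_sum_Nonbinary:
  assumes "f \<in> Nonbinary"
  shows "DeltaL f \<in> tens_sum (Nonbinary :: ('k::field) alg set)"
    and "DeltaR f \<in> tens_sum (Nonbinary :: ('k::field) alg set)"
proof -
  have t: "valid t" "nonbinary t" if "t \<in> Poly_Mapping.keys f" for t
    using assms that unfolding Nonbinary_def Alg_def by auto
  show "DeltaL f \<in> tens_sum Nonbinary"
    using Delta0_tens_sum_Nonbinary(1)[OF t] unfolding DeltaL_def tens_sum_def
    by (blast intro: lspan_sum lspan_smult)
  show "DeltaR f \<in> tens_sum Nonbinary"
    using Delta0_tens_sum_Nonbinary(2)[OF t] unfolding DeltaR_def tens_sum_def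
    by (blast intro: lspan_sum lspan_smult)
qed

theorem mainTheorem17:
  fixes I :: "('k::field) alg set"
  defines "I \<equiv> gen_ideal {dot x y | x y. x \<in> Aplus \<and> y \<in> Aplus}"
  shows "tri_ideal I \<and> (\<forall>f\<in>I. eps f = 0) \<and>
         DeltaL ` I \<subseteq> tens_sum I \<and> DeltaR ` I \<subseteq> tens_sum I"
proof -
  have I: "I = Nonbinary" unfolding I_def by (rule gen_ideal_dot_Aplus)
  have "\<forall>f\<in>I. eps f = 0" using Nonbinary_subset_Aplus unfolding I eps_def Aplus_def by blast
  then show ?thesis using tri_ideal_Nonbinary Delta_tens_sum_Nonbinary unfolding I by blast
qed

end
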